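(* Let $(\xi,Q)$ be an RQSE random overlap structure such that $\overline{S_Q}$ has no limit points from below (for every $q\in\overline{S_Q}$, $\sup\{p\in\overline{S_Q}:p<q\}<q$), and let $\nu$ be a random measure directing $(\xi,Q)$. Then almost surely the support of $\nu$ is countable.
   Context: A random overlap structure (ROSt) is a random pair $(\xi,Q)$ with $\xi=(\xi_1\ge\xi_2\ge\cdots\ge0)$, $\sum\xi_i\le1$, and $Q=(q_{ij})$ a symmetric positive semidefinite $\mathbb{N}\times\mathbb{N}$ matrix with $q_{ii}=1$. $S_Q=\{q_{ij}:i\ne j\}$; $Q^{*r}=(q_{ij}^r)$. For $r\in\mathbb{N}$, $\lambda>0$, the map $\Phi_{r,\lambda}$: conditionally on $(\xi,Q)$ let $(\kappa_i)$ be centered Gaussian with covariance $Q^{*r}$, set $\xi'_i=\xi_ie^{\lambda\kappa_i}/\sum_j\xi_je^{\lambda\kappa_j}$ ($\xi'\equiv0$ if $\xi\equiv0$), let $\pi$ order $\xi'$ non-increasingly (ties by original index), and output $((\xi'_{\pi(i)}),(q_{\pi(i)\pi(j)}))$. The ROSt is RQSE if its law is invariant under all $\Phi_{r,\lambda}$ ($r\in\mathbb{N},\lambda>0$), is ergodic (extremal among laws invariant under these maps), and $S_Q\subseteq(-1,1)$. A random Borel probability measure $\nu$ on a separable Hilbert space $\mathcal{H}$ directs $(\xi,Q)$ if, conditionally on $\nu$, $Q$ has the law of $\big((\phi_i,\phi_j)+\delta_{ij}(1-\|\phi_i\|^2)\big)_{i,j}$ where $(\phi_i)$ is i.i.d.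 with law $\nu$. *)

theory Defs
  imports "HOL-Probability.Probability"
begin

definition xspace :: "(nat \<Rightarrow> real) measure" where
  "xspace = PiM UNIV (\<lambda>_. borel)"

definition qspace :: "(nat \<Rightarrow> nat \<Rightarrow> real) measure" where
  "qspace = PiM UNIV (\<lambda>_. PiM UNIV (\<lambda>_. borel))"

definition rost_space :: "((nat \<Rightarrow> real) \<times> (nat \<Rightarrow> nat \<Rightarrow> real)) measure" where
  "rost_space = xspace \<Otimes>\<^sub>M qspace"

definition psd_mat :: "(nat \<Rightarrow> nat \<Rightarrow> real) \<Rightarrow> bool" where
  "psd_mat A \<longleftrightarrow> (\<forall>n c. 0 \<le> (\<Sum>i<n. \<Sum>j<n. c i * c j * A i j))"

definition rost_point :: "(nat \<Rightarrow> real) \<Rightarrow> (nat \<Rightarrow> nat \<Rightarrow> real) \<Rightarrow> bool" where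
  "rost_point x Q \<longleftrightarrow> (\<forall>i. 0 \<le> x i) \<and> (\<forall>i. x (Suc i) \<le> x i) \<and> summable x \<and> suminf x \<le> 1
     \<and> (\<forall>i j. Q i j = Q j i) \<and> (\<forall>i. Q i i = 1) \<and> psd_mat Q"

definition is_gaussian_cov :: "(nat \<Rightarrow> nat \<Rightarrow> real) \<Rightarrow> (nat \<Rightarrow> real) measure \<Rightarrow> bool" where
  "is_gaussian_cov C G \<longleftrightarrow> prob_space G \<and> sets G = sets xspace \<and>
     (\<forall>n t. char (distr G borel (\<lambda>k. \<Sum>i<n. t i * k i)) =
        (\<lambda>\<theta>. complex_of_real (exp (- (\<theta>\<^sup>2 * (\<Sum>i<n. \<Sum>j<n. t i * t j * C i j)) / 2))))"

definition gaussian :: "(nat \<Rightarrow> nat \<Rightarrow> real) \<Rightarrow> (nat \<Rightarrow> real) measure" where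
  "gaussian C = (if \<exists>G. is_gaussian_cov C G then (THE G. is_gaussian_cov C G)
                 else return xspace (\<lambda>_. 0))"

definition reweight :: "real \<Rightarrow> (nat \<Rightarrow> real) \<Rightarrow> (nat \<Rightarrow> real) \<Rightarrow> nat \<Rightarrow> real" where
  "reweight lam x k = (\<lambda>i. if (\<forall>j. x j = 0) then 0
      else x i * exp (lam * k i) / (\<Sum>j. x j * exp (lam * k j)))"

text \<open>Non-increasing ordering, ties broken by original index: pi n is the index whose
  set of predecessors (strictly larger entries, or equal entries with smaller index)
  is finite of cardinality n.\<close>

definition preds :: "(nat \<Rightarrow> real) \<Rightarrow> nat \<Rightarrow> nat set" where
  "preds y i = {j. y i < y j \<or> (y j = y i \<and> j < i)}"

definition sort_perm :: "(nat \<Rightarrow> real) \<Rightarrow> nat \<Rightarrow> nat" where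
  "sort_perm y n = (THE i. finite (preds y i) \<and> card (preds y i) = n)"

definition Phi_kernel :: "nat \<Rightarrow> real \<Rightarrow> (nat \<Rightarrow> real) \<times> (nat \<Rightarrow> nat \<Rightarrow> real)
     \<Rightarrow> ((nat \<Rightarrow> real) \<times> (nat \<Rightarrow> nat \<Rightarrow> real)) measure" where
  "Phi_kernel r lam s = (case s of (x, Q) \<Rightarrow>
     distr (gaussian (\<lambda>i j. Q i j ^ r)) rost_space
       (\<lambda>k. let y = reweight lam x k; p = sort_perm y
            in (\<lambda>n. y (p n), \<lambda>n m. Q (p n) (p m))))"

definition rqse_invariant :: "((nat \<Rightarrow> real) \<times> (nat \<Rightarrow> nat \<Rightarrow> real)) measure \<Rightarrow> bool" where
  "rqse_invariant P \<longleftrightarrow> prob_space P \<and> sets P = sets rost_space \<and>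
     (\<forall>r::nat. r \<ge> 1 \<longrightarrow> (\<forall>lam::real. lam > 0 \<longrightarrow> bind P (Phi_kernel r lam) = P))"

definition rqse_ergodic :: "((nat \<Rightarrow> real) \<times> (nat \<Rightarrow> nat \<Rightarrow> real)) measure \<Rightarrow> bool" where
  "rqse_ergodic P \<longleftrightarrow> rqse_invariant P \<and>
     (\<forall>P1 P2 (a::real). rqse_invariant P1 \<and> rqse_invariant P2 \<and> 0 < a \<and> a < 1 \<and>
        (\<forall>A\<in>sets rost_space. measure P A = a * measure P1 A + (1 - a) * measure P2 A)
        \<longrightarrow> P1 = P)"

definition overlaps :: "(nat \<Rightarrow> nat \<Rightarrow> real) \<Rightarrow> real set" where
  "overlaps Q = {Q i j | i j. i \<noteq> j}"

text \<open>No limit points from below: sup{p in S : p < q} < q (sup of empty set = -infinity).\<close>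

definition no_limit_from_below :: "real set \<Rightarrow> bool" where
  "no_limit_from_below S \<longleftrightarrow> (\<forall>q\<in>S. \<exists>e>0. \<forall>p\<in>S. p < q \<longrightarrow> p \<le> q - e)"

definition gram :: "(nat \<Rightarrow> 'h::real_inner) \<Rightarrow> nat \<Rightarrow> nat \<Rightarrow> real" where
  "gram phi = (\<lambda>i j. inner (phi i) (phi j) + (if i = j then 1 - (norm (phi i))\<^sup>2 else 0))"

definition directs :: "'w measure \<Rightarrow> ('w \<Rightarrow> 'h::real_inner measure) \<Rightarrow> ('w \<Rightarrow> nat \<Rightarrow> nat \<Rightarrow> real) \<Rightarrow> bool" where
  "directs M nu Q \<longleftrightarrow>
     distr M (prob_algebra borel \<Otimes>\<^sub>M qspace) (\<lambda>w. (nu w, Q w)) =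
     bind (distr M (prob_algebra borel) nu)
       (\<lambda>m. distr (PiM UNIV (\<lambda>_. m)) (prob_algebra borel \<Otimes>\<^sub>M qspace) (\<lambda>phi. (m, gram phi)))"

definition msupport :: "'h::metric_space measure \<Rightarrow> 'h set" where
  "msupport m = {x. \<forall>e>0. emeasure m (ball x e) > 0}"

end

theory Submission
  imports Defs
begin

text \<open>Two distinct sample points drawn from \<nu> fall into any two balls of positive \<nu>-mass,
  so every inner product of points of the support of \<nu> is a limit of off-diagonal overlaps and
  lies in the closure of S_Q. For distinct x, y of equal norm, (x, y) < |x|^2, and the gap of that
  closure below |x|^2 bounds |x - y| from below; hence each sphere meets the support in a separated,
  thus countable, set. The possible values of |x|^2 form a set without limit points from below,
  which is countable.\<close>

lemma no_limit_from_below_countable: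
  fixes T :: "real set"
  assumes "no_limit_from_below T"
  shows "countable T"
proof -
  obtain e where e: "\<And>q. q \<in> T \<Longrightarrow> 0 < e q" "\<And>q p. q \<in> T \<Longrightarrow> p \<in> T \<Longrightarrow> p < q \<Longrightarrow> p \<le> q - e q"
    using assms unfolding no_limit_from_below_def by metis
  have "\<exists>r\<in>\<rat>. q - e q < r \<and> r < q" if "q \<in> T" for q
    using Rats_dense_in_real[of "q - e q" q] e(1)[OF that] by auto
  then obtain f where f: "\<And>q. q \<in> T \<Longrightarrow> f q \<in> \<rat> \<and> q - e q < f q \<and> f q < q"
    by metis
  \<comment> \<open>the gaps below the points of T are disjoint, so a rational in each gap is an injection\<close>
  have "inj_on f T"
  proof (rule inj_onI)
    fix p q assume pq: "p \<in> T" "q \<in> T" "f p = f q"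
    show "p = q"
    proof (rule ccontr)
      assume "p \<noteq> q"
      then consider "p < q" | "q < p" by linarith
      then show False
        using e(2)[OF pq(1,2)] e(2)[OF pq(2,1)] f[OF pq(1)] f[OF pq(2)] pq(3) by cases fastforce+
    qed
  qed
  moreover have "f ` T \<subseteq> \<rat>" using f by auto
  ultimately show ?thesis
    using countable_rat countable_subset countable_image_inj_on by blast
qed

lemma countable_if_separated:
  fixes L :: "'a::{metric_space, second_countable_topology} set"
  assumes "0 < d" and sep: "\<And>x y. x \<in> L \<Longrightarrow> y \<in> L \<Longrightarrow> x \<noteq> y \<Longrightarrow> d \<le> dist x y"
  shows "countable L"
proof -
  have disj: "disjnt (ball x (d/2)) (ball y (d/2))" if "x \<in> L" "y \<in> L" "x \<noteq> y" for x y
    using sep[OF that] dist_triangle_half_r[of _ x d y] by (force simp: disjnt_def dist_commute)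
  have inj: "inj_on (\<lambda>x. ball x (d/2)) L"
    using disj \<open>0 < d\<close> by (intro inj_onI) (metis centre_in_ball disjnt_iff half_gt_zero)
  have "pairwise disjnt ((\<lambda>x. ball x (d/2)) ` L)"
    using disj by (auto simp: pairwise_def)
  then have "countable ((\<lambda>x. ball x (d/2)) ` L)"
    by (intro countable_disjoint_open_subsets) auto
  then show ?thesis using inj countable_image_inj_on by blast
qed

lemma dense_sequence_exists:
  obtains d :: "nat \<Rightarrow> 'a::{metric_space, second_countable_topology}"
  where "\<And>x e. 0 < e \<Longrightarrow> \<exists>k. dist (d k) x < e"
proof -
  obtain D :: "'a set" where "countable D" and D: "\<And>X. open X \<Longrightarrow> X \<noteq> {} \<Longrightarrow> \<exists>d\<in>D. d \<in> X"
    using countable_dense_setE by blast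
  have "\<exists>k. dist (from_nat_into D k) x < e" if "0 < e" for x :: 'a and e :: real
    using D[of "ball x e"] that from_nat_into_surj[OF \<open>countable D\<close>]
    by (fastforce simp: dist_commute)
  then show ?thesis by (rule that)
qed

lemma countable_if_inner_in_no_limit_from_below:
  fixes K :: "'h::{real_inner, second_countable_topology} set"
  assumes T: "no_limit_from_below T"
    and KT: "\<And>x y. x \<in> K \<Longrightarrow> y \<in> K \<Longrightarrow> inner x y \<in> T"
  shows "countable K"
proof -
  have "countable {x\<in>K. inner x x = c}" if "c \<in> T" for c
  proof -
    obtain e where e: "0 < e" "\<And>p. p \<in> T \<Longrightarrow> p < c \<Longrightarrow> p \<le> c - e"
      using T \<open>c \<in> T\<close> unfolding no_limit_from_below_def by blast
    show ?thesis
    proof (rule countable_if_separated)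
      show "0 < sqrt (2 * e)" using e by simp
      fix x y assume x: "x \<in> {x\<in>K. inner x x = c}" and y: "y \<in> {x\<in>K. inner x x = c}" and "x \<noteq> y"
      \<comment> \<open>distinct points of equal norm have inner product below c, hence at most c - e\<close>
      have "(dist x y)\<^sup>2 = 2 * c - 2 * inner x y"
        using x y by (simp add: dist_norm power2_norm_eq_inner inner_diff inner_commute)
      moreover have "inner x y < c"
      proof -
        have "0 < (dist x y)\<^sup>2" using \<open>x \<noteq> y\<close> by simp
        with \<open>(dist x y)\<^sup>2 = 2 * c - 2 * inner x y\<close> show ?thesis by simp
      qed
      then have "inner x y \<le> c - e" using e(2) KT x y by simp
      ultimately have "2 * e \<le> (dist x y)\<^sup>2" by simp
      then show "sqrt (2 * e) \<le> dist x y" by (simp add: real_le_lsqrt)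
    qed
  qed
  then have "countable (\<Union>c\<in>T. {x\<in>K. inner x x = c})"
    using no_limit_from_below_countable[OF T] by (intro countable_UN) auto
  moreover have "K \<subseteq> (\<Union>c\<in>T. {x\<in>K. inner x x = c})" using KT by auto
  ultimately show ?thesis by (rule countable_subset[rotated])
qed

lemma abs_inner_diff_le:
  fixes a b c d :: "'h::real_inner"
  assumes "dist a b \<le> s" "dist c d \<le> s"
  shows "\<bar>inner a c - inner b d\<bar> \<le> s * (norm b + norm d + s)"
proof -
  have ab: "norm (a - b) \<le> s" and cd: "norm (c - d) \<le> s" using assms by (auto simp: dist_norm)
  have c: "norm c \<le> norm d + s" using cd norm_triangle_sub[of c d] by linarith
  have "\<bar>inner a c - inner b d\<bar> = \<bar>inner (a - b) c + inner b (c - d)\<bar>"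
    by (simp add: inner_diff_left inner_diff_right)
  also have "\<dots> \<le> \<bar>inner (a - b) c\<bar> + \<bar>inner b (c - d)\<bar>"
    by (rule abs_triangle_ineq)
  also have "\<dots> \<le> norm (a - b) * norm c + norm b * norm (c - d)"
    by (intro add_mono Cauchy_Schwarz_ineq2)
  also have "\<dots> \<le> s * (norm d + s) + norm b * s"
    using ab cd c order_trans[OF norm_ge_zero ab] by (intro add_mono mult_mono mult_left_mono) auto
  finally show ?thesis by (simp add: algebra_simps)
qed

lemma msupport_emeasure_ball_pos:
  assumes "x \<in> msupport m" "sets m = sets borel" "dist a x < r"
  shows "0 < emeasure m (ball a r)"
proof -
  have "0 < emeasure m (ball x (r - dist a x))"
    using assms(1,3) unfolding msupport_def by simp
  also have "\<dots> \<le> emeasure m (ball a r)"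
  proof (rule emeasure_mono)
    show "ball x (r - dist a x) \<subseteq> ball a r"
    proof
      fix y assume "y \<in> ball x (r - dist a x)"
      then show "y \<in> ball a r" using dist_triangle[of a y x] by simp
    qed
  qed (use assms(2) in simp)
  finally show ?thesis .
qed

text \<open>A countable condition along a dense sequence d and radii 1/(n+1), so that it is
  measurable in (m, A); it yields that A approximates all inner products of support points of m.\<close>

definition gram_approximates :: "(nat \<Rightarrow> 'h::real_inner) \<Rightarrow> 'h measure \<Rightarrow> (nat \<Rightarrow> nat \<Rightarrow> real) \<Rightarrow> bool" where
  "gram_approximates d m A \<longleftrightarrow> (\<forall>k l n::nat.
     0 < emeasure m (ball (d k) (1 / real (Suc n))) \<longrightarrow> 0 < emeasure m (ball (d l) (1 / real (Suc n))) \<longrightarrow>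
     (\<exists>i j. i \<noteq> j \<and> \<bar>A i j - inner (d k) (d l)\<bar>
        \<le> 1 / real (Suc n) * (norm (d k) + norm (d l) + 1 / real (Suc n))))"

lemma inner_msupport_in_closure_overlaps:
  fixes d :: "nat \<Rightarrow> 'h::real_inner"
  assumes dense: "\<And>x e. 0 < e \<Longrightarrow> \<exists>k. dist (d k) x < e"
    and approx: "gram_approximates d m A" and m: "sets m = sets borel"
    and x: "x \<in> msupport m" and y: "y \<in> msupport m"
  shows "inner x y \<in> closure (overlaps A)"
  unfolding closure_approachable
proof (intro allI impI)
  fix \<epsilon> :: real assume "0 < \<epsilon>"
  define C where "C = 2 * (norm x + norm y + 2)"
  have "0 < C" by (simp add: C_def add_nonneg_pos)
  then obtain n where n: "inverse (real (Suc n)) < \<epsilon> / C"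
    using reals_Archimedean[of "\<epsilon> / C"] \<open>0 < \<epsilon>\<close> by auto
  define r where "r = 1 / real (Suc n)"
  have r: "0 < r" "r \<le> 1" "r * C < \<epsilon>"
    using n \<open>0 < C\<close> by (auto simp: r_def inverse_eq_divide pos_less_divide_eq mult.commute)
  obtain k l where k: "dist (d k) x < r" and l: "dist (d l) y < r"
    using dense r(1) by blast
  have "0 < emeasure m (ball (d k) r)" "0 < emeasure m (ball (d l) r)"
    using msupport_emeasure_ball_pos m x y k l by blast+
  then obtain i j where "i \<noteq> j" and ij: "\<bar>A i j - inner (d k) (d l)\<bar> \<le> r * (norm (d k) + norm (d l) + r)"
    using approx unfolding gram_approximates_def r_def by blast
  have "norm (d k) \<le> norm x + 1" "norm (d l) \<le> norm y + 1"
    using k l r(2) norm_triangle_sub[of "d k" x] norm_triangle_sub[of "d l" y] by (auto simp: dist_norm)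
  then have "r * (norm (d k) + norm (d l) + r) \<le> r * (norm x + norm y + 3)"
    using r by (intro mult_left_mono) auto
  moreover have "\<bar>inner (d k) (d l) - inner x y\<bar> \<le> r * (norm x + norm y + 1)"
  proof -
    have "\<bar>inner (d k) (d l) - inner x y\<bar> \<le> r * (norm x + norm y + r)"
      using k l by (intro abs_inner_diff_le) auto
    also have "\<dots> \<le> r * (norm x + norm y + 1)" using r by (intro mult_left_mono) auto
    finally show ?thesis .
  qed
  ultimately have "dist (A i j) (inner x y) \<le> r * C"
    using ij by (simp add: dist_real_def C_def algebra_simps)
  moreover have "A i j \<in> overlaps A" using \<open>i \<noteq> j\<close> by (auto simp: overlaps_def)
  ultimately show "\<exists>z\<in>overlaps A. dist z (inner x y) < \<epsilon>" using r(3) by force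
qed

lemma AE_PiM_exists_in:
  fixes g :: "nat \<Rightarrow> nat"
  assumes "prob_space m" "B \<in> sets m" "0 < emeasure m B" "inj g"
  shows "AE \<phi> in PiM UNIV (\<lambda>_::nat. m). \<exists>i. \<phi> (g i) \<in> B"
proof -
  interpret m: prob_space m by fact
  let ?P = "PiM UNIV (\<lambda>_::nat. m)"
  interpret P: prob_space ?P using assms(1) by (rule prob_space_PiM)
  define p where "p = measure m B"
  have p: "0 < p" "p \<le> 1" using assms(3) by (auto simp: p_def m.emeasure_eq_measure)
  define E where "E n = prod_emb UNIV (\<lambda>_. m) (g ` {..<n}) (PiE (g ` {..<n}) (\<lambda>_. space m - B))" for n
  have E: "E n \<in> sets ?P" for n
    unfolding E_def using assms(2) by (intro sets_PiM_I) auto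
  have "emeasure ?P (E n) = (\<Prod>i\<in>g ` {..<n}. emeasure m (space m - B))" for n
    unfolding E_def using assms(2) by (intro emeasure_PiM_emb) (auto simp: m.prob_space_axioms)
  also have "\<dots> n = ennreal ((1 - p) ^ n)" for n
    using assms(2,4) p by (simp add: card_image[OF inj_on_subset[OF assms(4) subset_UNIV]] m.emeasure_eq_measure m.prob_compl p_def ennreal_power)
  finally have measure_E: "measure ?P (E n) = (1 - p) ^ n" for n
    using p by (simp add: P.emeasure_eq_measure)
  have miss: "{\<phi> \<in> space ?P. \<not> (\<exists>i. \<phi> (g i) \<in> B)} \<subseteq> (\<Inter>n. E n)"
    by (auto simp: E_def space_PiM prod_emb_iff PiE_iff)
  have "measure ?P (\<Inter>n. E n) \<le> (1 - p) ^ n" for n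
    unfolding measure_E[symmetric] using E by (intro P.finite_measure_mono) auto
  moreover have "(\<lambda>n. (1 - p) ^ n) \<longlonglongrightarrow> 0"
    using p by (intro LIMSEQ_realpow_zero) auto
  ultimately have "measure ?P (\<Inter>n. E n) \<le> 0"
    by (intro LIMSEQ_le_const) auto
  then have "emeasure ?P (\<Inter>n. E n) = 0"
    by (simp add: P.emeasure_eq_measure measure_nonneg antisym)
  with miss E show ?thesis
    by (intro AE_I[OF miss]) auto
qed

lemma AE_PiM_exists_distinct_in:
  assumes "prob_space m" "B \<in> sets m" "B' \<in> sets m" "0 < emeasure m B" "0 < emeasure m B'"
  shows "AE \<phi> in PiM UNIV (\<lambda>_::nat. m). \<exists>i j. i \<noteq> j \<and> \<phi> i \<in> B \<and> \<phi> j \<in> B'"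
proof -
  \<comment> \<open>look for B at the even indices and for B' at the odd ones\<close>
  have "AE \<phi> in PiM UNIV (\<lambda>_::nat. m). \<exists>i. \<phi> (2 * i) \<in> B"
    using assms by (intro AE_PiM_exists_in) (auto intro: injI)
  moreover have "AE \<phi> in PiM UNIV (\<lambda>_::nat. m). \<exists>j. \<phi> (2 * j + 1) \<in> B'"
    using assms by (intro AE_PiM_exists_in) (auto intro: injI)
  ultimately show ?thesis
  proof eventually_elim
    case (elim \<phi>)
    then obtain i j where "\<phi> (2 * i) \<in> B" "\<phi> (2 * j + 1) \<in> B'" by blast
    moreover have "2 * i \<noteq> 2 * j + 1" by presburger
    ultimately show ?case by blast
  qed
qed

lemma AE_gram_approximates:
  fixes d :: "nat \<Rightarrow> 'h::real_inner"
  assumes "m \<in> space (prob_algebra borel)"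
  shows "AE \<phi> in PiM UNIV (\<lambda>_::nat. m). gram_approximates d m (gram \<phi>)"
proof -
  have m: "prob_space m" "sets m = sets borel" using assms by (auto simp: space_prob_algebra)
  have "AE \<phi> in PiM UNIV (\<lambda>_::nat. m).
      0 < emeasure m (ball (d k) r) \<longrightarrow> 0 < emeasure m (ball (d l) r) \<longrightarrow>
      (\<exists>i j. i \<noteq> j \<and> \<bar>gram \<phi> i j - inner (d k) (d l)\<bar> \<le> r * (norm (d k) + norm (d l) + r))"
    for k l :: nat and r :: real
  proof (cases "0 < emeasure m (ball (d k) r) \<and> 0 < emeasure m (ball (d l) r)")
    case True
    then have "AE \<phi> in PiM UNIV (\<lambda>_::nat. m). \<exists>i j. i \<noteq> j \<and> \<phi> i \<in> ball (d k) r \<and> \<phi> j \<in> ball (d l) r"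
      using m by (intro AE_PiM_exists_distinct_in) auto
    then show ?thesis
    proof eventually_elim
      case (elim \<phi>)
      then obtain i j where "i \<noteq> j" "\<phi> i \<in> ball (d k) r" "\<phi> j \<in> ball (d l) r" by blast
      moreover from this have "\<bar>inner (\<phi> i) (\<phi> j) - inner (d k) (d l)\<bar> \<le> r * (norm (d k) + norm (d l) + r)"
        by (intro abs_inner_diff_le) (auto simp: dist_commute)
      ultimately show ?case by (auto simp: gram_def)
    qed
  next
    case False
    then show ?thesis by (intro AE_I2) auto
  qed
  then show ?thesis
    unfolding gram_approximates_def AE_all_countable by blast
qed

lemma measurable_emeasure_prob_algebra[measurable]:
  "a \<in> sets A \<Longrightarrow> (\<lambda>M. emeasure M a) \<in> borel_measurable (prob_algebra A)"
  unfolding prob_algebra_def by (intro measurable_restrict_space1 measurable_emeasure_subprob_algebra)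

lemma measurable_PiM_prob_algebra:
  "(\<lambda>m. PiM I (\<lambda>_. m)) \<in> prob_algebra N \<rightarrow>\<^sub>M prob_algebra (PiM I (\<lambda>_. N))"
proof (rule measurable_prob_algebra_generated[OF sets_PiM Int_stable_prod_algebra prod_algebra_sets_into_space])
  fix a assume "a \<in> space (prob_algebra N)"
  then have a: "prob_space a" "sets a = sets N" by (auto simp: space_prob_algebra)
  then show "prob_space (PiM I (\<lambda>_. a))" by (intro prob_space_PiM)
  show "sets (PiM I (\<lambda>_. a)) = sets (PiM I (\<lambda>_. N))" using a by (intro sets_PiM_cong) auto
next
  fix A assume "A \<in> prod_algebra I (\<lambda>_. N)"
  then obtain J E where A: "A = prod_emb I (\<lambda>_. N) J (PiE J E)" "finite J" "J \<subseteq> I"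
      "\<And>i. i \<in> J \<Longrightarrow> E i \<in> sets N"
    by (auto elim!: prod_algebraE)
  have "emeasure (PiM I (\<lambda>_. a)) A = (\<Prod>i\<in>J. emeasure a (E i))"
    if "a \<in> space (prob_algebra N)" for a
  proof -
    from that have a: "prob_space a" "sets a = sets N" by (auto simp: space_prob_algebra)
    then have "A = prod_emb I (\<lambda>_. a) J (PiE J E)"
      using A(1) sets_eq_imp_space_eq[OF a(2)] by (simp add: prod_emb_def)
    then show ?thesis using A a by (simp add: emeasure_PiM_emb)
  qed
  moreover have "(\<lambda>a. \<Prod>i\<in>J. emeasure a (E i)) \<in> borel_measurable (prob_algebra N)"
    using A(4) by measurable
  ultimately show "(\<lambda>a. emeasure (PiM I (\<lambda>_. a)) A) \<in> borel_measurable (prob_algebra N)"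
    by (subst measurable_cong) auto
qed

lemma measurable_qspace_entry[measurable]: "(\<lambda>A. A i j) \<in> qspace \<rightarrow>\<^sub>M borel"
  unfolding qspace_def
  by (rule measurable_compose[of "\<lambda>A. A i" _ "PiM UNIV (\<lambda>_. borel)" "\<lambda>f. f j"])
    (simp_all add: measurable_component_singleton)

lemma measurable_gram[measurable]:
  "gram \<in> PiM UNIV (\<lambda>_::nat. borel::'h::{real_inner, second_countable_topology} measure) \<rightarrow>\<^sub>M qspace"
  unfolding qspace_def
proof (intro measurable_PiM_single')
  fix i j
  show "(\<lambda>\<phi>. gram \<phi> i j) \<in> borel_measurable (PiM UNIV (\<lambda>_. borel::'h measure))"
    unfolding gram_def by measurable
qed (auto simp: space_PiM)

lemma pred_gram_approximates:
  fixes d :: "nat \<Rightarrow> 'h::{real_inner, second_countable_topology}"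
  shows "Measurable.pred (prob_algebra borel \<Otimes>\<^sub>M qspace) (\<lambda>x. gram_approximates d (fst x) (snd x))"
  unfolding gram_approximates_def by measurable

lemma AE_directs:
  fixes nu :: "'w \<Rightarrow> 'h::{real_inner, second_countable_topology} measure"
  assumes "directs M nu Q" and nu: "nu \<in> M \<rightarrow>\<^sub>M prob_algebra borel" and Q: "Q \<in> M \<rightarrow>\<^sub>M qspace"
    and P: "Measurable.pred (prob_algebra borel \<Otimes>\<^sub>M qspace) (\<lambda>x. P (fst x) (snd x))"
    and sample: "\<And>m. m \<in> space (prob_algebra borel) \<Longrightarrow> AE \<phi> in PiM UNIV (\<lambda>_. m). P m (gram \<phi>)"
  shows "AE w in M. P (nu w) (Q w)"
proof -
  let ?O = "prob_algebra (borel::'h measure) \<Otimes>\<^sub>M qspace"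
  let ?K = "\<lambda>m. distr (PiM UNIV (\<lambda>_::nat. m)) ?O (\<lambda>\<phi>. (m, gram \<phi>))"
  have "?K \<in> prob_algebra borel \<rightarrow>\<^sub>M prob_algebra ?O"
    by (rule measurable_distr_prob_space2[OF measurable_PiM_prob_algebra]) measurable
  then have K: "?K \<in> distr M (prob_algebra borel) nu \<rightarrow>\<^sub>M subprob_algebra ?O"
    by (simp add: measurable_prob_algebraD cong: measurable_cong_sets)
  have fibre: "AE x in ?K m. P (fst x) (snd x)" if m: "m \<in> space (prob_algebra borel)" for m
  proof -
    have "sets (PiM UNIV (\<lambda>_::nat. m)) = sets (PiM UNIV (\<lambda>_::nat. borel::'h measure))"
      using m by (intro sets_PiM_cong) (auto simp: space_prob_algebra)
    then have "(\<lambda>\<phi>. (m, gram \<phi>)) \<in> PiM UNIV (\<lambda>_::nat. m) \<rightarrow>\<^sub>M ?O"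
      using m by (simp cong: measurable_cong_sets)
    then show ?thesis
      using sample[OF m] P by (subst AE_distr_iff) (auto simp: pred_def)
  qed
  have "AE x in distr M (prob_algebra borel) nu \<bind> ?K. P (fst x) (snd x)"
    unfolding AE_bind[OF K P] by (rule AE_I2) (simp add: fibre)
  moreover have "distr M ?O (\<lambda>w. (nu w, Q w)) = distr M (prob_algebra borel) nu \<bind> ?K"
    using \<open>directs M nu Q\<close> unfolding directs_def .
  ultimately have "AE x in distr M ?O (\<lambda>w. (nu w, Q w)). P (fst x) (snd x)"
    by (simp only:)
  then show ?thesis
    using AE_distrD[OF measurable_Pair[OF nu Q]] by fastforce
qed

theorem lemma4p2:
  fixes M :: "'w measure"
    and xi :: "'w \<Rightarrow> nat \<Rightarrow> real"
    and Q :: "'w \<Rightarrow> nat \<Rightarrow> nat \<Rightarrow> real"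
    and nu :: "'w \<Rightarrow> 'h::{real_inner, complete_space, second_countable_topology} measure"
  assumes "prob_space M"
    and "xi \<in> M \<rightarrow>\<^sub>M xspace"
    and "Q \<in> M \<rightarrow>\<^sub>M qspace"
    and "AE w in M. rost_point (xi w) (Q w)"
    and "rqse_ergodic (distr M rost_space (\<lambda>w. (xi w, Q w)))"
    and "AE w in M. overlaps (Q w) \<subseteq> {-1<..<1}"
    and "AE w in M. no_limit_from_below (closure (overlaps (Q w)))"
    and "nu \<in> M \<rightarrow>\<^sub>M prob_algebra borel"
    and "directs M nu Q"
  shows "AE w in M. countable (msupport (nu w))"
proof -
  obtain d :: "nat \<Rightarrow> 'h" where dense: "\<And>x e. 0 < e \<Longrightarrow> \<exists>k. dist (d k) x < e"
    using dense_sequence_exists by blast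
  have "AE w in M. gram_approximates d (nu w) (Q w)"
    using assms(9,8,3) pred_gram_approximates AE_gram_approximates by (rule AE_directs)
  moreover have "AE w in M. nu w \<in> space (prob_algebra borel)"
    using measurable_space[OF assms(8)] by simp
  ultimately show ?thesis
    using assms(7)
  proof eventually_elim
    case (elim w)
    then have "sets (nu w) = sets borel" by (simp add: space_prob_algebra)
    with elim show ?case
      by (auto intro: countable_if_inner_in_no_limit_from_below inner_msupport_in_closure_overlaps[OF dense])
  qed
qed

end
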